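(* Let $f_1:\mathbb{R}^m\to(-\infty,+\infty]$ be proper convex lower semi-continuous, $B\in\mathbb{R}^{m\times d}$, and $f_2(x)=\frac1n\sum_{i=1}^n\phi_i(x)$ with each $\phi_i:\mathbb{R}^d\to\mathbb{R}$ smooth and convex. Let $(x_k,v_k)_{k\ge1}$ be generated by Algorithm 1 (described in the context) with parameters $c>0$, $\alpha\in(0,1]$ and $0<\lambda\le 1/\rho_{\max}(BB^T)$. Let $x^*$ be a minimizer of $f_1(Bx)+f_2(x)$ over $\mathbb{R}^d$ and let $v^*\in\mathbb{R}^m$ be such that, for every $k$, with $h_k(x)=\frac{\lambda}{\gamma_k}f_1(\frac{\gamma_k}{\lambda}x)$, $$v^*=(I-\mathrm{Prox}_{h_k})\Big(\tfrac{\lambda}{\gamma_k}B\big(x^*-\gamma_k\nabla f_2(x^* )\big)+(I-\lambda BB^T)v^*\Big),\qquad x^*=x^*-\gamma_k\nabla f_2(x^* )-\gamma_kB^Tv^*.$$ Then for every $k\ge1$, $$\begin{aligned}\mathbb{E}^{(k+1)}\Big(\|x_{k+1}-x^*\|_2^2+\tfrac{\gamma_{k+1}^2}{\lambda}\|v_{k+1}-v^*\|_2^2\Big)\le\ &\mathbb{E}^{(k)}\big(\|x_k-x^*\|_2^2\big)+\tfrac{\gamma_k^2}{\lambda}\big(1-\lambda\rho_{\min}(BB^T)\big)\mathbb{E}^{(k)}\big(\|v_k-v^*\|_2^2\big)\\ &-2\gamma_k\,\mathbb{E}^{(k)}\langle\nabla f_2(x_k)-\nabla f_2(x^* ),x_k-x^*\rangle\\&+\gamma_k^2\,\mathbb{E}^{(k+1)}\big(\|\nabla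 f_2^{[i_k]}(x_k)-\nabla f_2(x^* )\|_2^2\big).\end{aligned}$$
   Context: $\mathrm{Prox}_f(y)=\arg\min_x\{f(x)+\frac12\|x-y\|_2^2\}$. $\rho_{\max}(BB^T)$ and $\rho_{\min}(BB^T)$ are the largest and smallest eigenvalues of $BB^T$. Stochastic gradient: fix a batch size $p$ dividing $n$; for $i\in\{1,\dots,n/p\}$ let $\nabla f_2^{[i]}(x)=\frac1p\sum_{j=(i-1)p+1}^{ip}\nabla\phi_j(x)$. Algorithm 1: choose $x_1\in\mathbb{R}^d$, $v_1\in\mathbb{R}^m$; for $k=1,2,\dots$: set $\gamma_k=c/k^\alpha$; draw $i_k$ from $\{1,\dots,n/p\}$, each value with probability $p/n$, independently of the past; set $x_{k+1/2}=x_k-\gamma_k\nabla f_2^{[i_k]}(x_k)$, $v_{k+1}=\frac{\lambda}{\gamma_k}\big(I-\mathrm{Prox}_{\frac{\gamma_k}{\lambda}f_1}\big)\big(Bx_{k+1/2}+(I-\lambda BB^T)\frac{\gamma_k}{\lambda}v_k\big)$, $x_{k+1}=x_{k+1/2}-\gamma_kB^Tv_{k+1}$. $\mathbb{E}^{(k)}(\cdot)$ denotes expectation with respect to all random indices drawn up to the $k$-th iterate (i.e. $i_1,\dots,i_{k-1}$, which determine $x_k,v_k$); thus $\mathbb{E}^{(k+1)}$ also averages over $i_k$. *)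

theory Defs
  imports "HOL-Analysis.Analysis"
begin

definition proper_fun :: "('a \<Rightarrow> ereal) \<Rightarrow> bool" where
  "proper_fun f \<longleftrightarrow> (\<forall>x. f x \<noteq> -\<infinity>) \<and> (\<exists>x. f x \<noteq> \<infinity>)"

definition convex_ereal_fun :: "('a::real_vector \<Rightarrow> ereal) \<Rightarrow> bool" where
  "convex_ereal_fun f \<longleftrightarrow>
     (\<forall>x y t. 0 < t \<and> t < 1 \<longrightarrow>
        f ((1 - t) *\<^sub>R x + t *\<^sub>R y) \<le> ereal (1 - t) * f x + ereal t * f y)"

definition lsc_fun :: "('a::topological_space \<Rightarrow> ereal) \<Rightarrow> bool" where
  "lsc_fun f \<longleftrightarrow> (\<forall>x. f x \<le> Liminf (at x) f)"

definition prox :: "('a::real_normed_vector \<Rightarrow> ereal) \<Rightarrow> 'a \<Rightarrow> 'a" where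
  "prox f y = (SOME x. \<forall>z. f x + ereal ((norm (x - y))\<^sup>2 / 2) \<le> f z + ereal ((norm (z - y))\<^sup>2 / 2))"

definition eigenvalues :: "real^'m^'m \<Rightarrow> real set" where
  "eigenvalues A = {\<mu>. \<exists>w. w \<noteq> 0 \<and> A *v w = \<mu> *\<^sub>R w}"

definition rho_max :: "real^'m^'m \<Rightarrow> real" where
  "rho_max A = Max (eigenvalues A)"

definition rho_min :: "real^'m^'m \<Rightarrow> real" where
  "rho_min A = Min (eigenvalues A)"

text \<open>Expectation E^{(k)}: uniform average over all index sequences i_1,...,i_{k-1},
  each index taking values in {0..<N} with probability 1/N, independently.\<close>
definition expect_k :: "nat \<Rightarrow> nat \<Rightarrow> ((nat \<Rightarrow> nat) \<Rightarrow> real) \<Rightarrow> real" where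
  "expect_k N k g =
     (\<Sum>s\<in>PiE {1..<k} (\<lambda>_. {..<N}). g s) / real (card (PiE {1..<k} (\<lambda>_. {..<N})))"

end

theory Submission
  imports Defs "HOL-Real_Asymp.Real_Asymp"
begin

(*
  Write t = gamma_k / lambda.  The dual update is v_(k+1) = (1/t) (a_k - Prox_(t f1) a_k), and
  the fixed-point equation for v* has the same shape, because t Prox_h w = Prox_(t f1) (t w) for
  h u = (1/t) f1 (t u).  Firm nonexpansiveness of I - Prox_(t f1) bounds |v_(k+1) - v*|^2 by an
  inner product; together with lambda |B^T u|^2 <= |u|^2 and rho_min |u|^2 <= |B^T u|^2 this
  gives, for each fixed value of the sampled index i_k, a deterministic bound on
  |x_(k+1) - x*|^2 + (gamma_k^2 / lambda) |v_(k+1) - v*|^2.  As x_k and v_k depend only on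
  i_1, ..., i_(k-1), averaging over i_k turns the batch gradient in the cross term into
  grad f2 (x_k), and gamma_(k+1) <= gamma_k lets us replace gamma_k by gamma_(k+1) on the left.
*)

lemma norm_add_scaleR_power2:
  fixes x y :: "'a::real_inner"
  shows "(norm (x + s *\<^sub>R y))\<^sup>2 = (norm x)\<^sup>2 + 2 * s * (x \<bullet> y) + s\<^sup>2 * (norm y)\<^sup>2"
  unfolding power2_norm_eq_inner
  by (simp add: inner_commute power2_eq_square algebra_simps)

section \<open>Lower semicontinuous convex functions and proximal points\<close>

lemma lsc_fun_iff_open_superlevel:
  fixes f :: "'a::topological_space \<Rightarrow> ereal"
  shows "lsc_fun f \<longleftrightarrow> (\<forall>c. open {x. c < f x})"
proof
  assume lsc: "lsc_fun f"
  show "\<forall>c. open {x. c < f x}"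
  proof (intro allI, subst open_subopen, intro ballI)
    fix c x assume "x \<in> {x. c < f x}"
    then have "c < Liminf (at x) f"
      using lsc order_less_le_trans unfolding lsc_fun_def by blast
    then have "eventually (\<lambda>y. c < f y) (at x)" by (rule less_LiminfD)
    then obtain S where "open S" "x \<in> S" "\<forall>y\<in>S. y \<noteq> x \<longrightarrow> c < f y"
      unfolding eventually_at_topological by blast
    then show "\<exists>T. open T \<and> x \<in> T \<and> T \<subseteq> {x. c < f x}"
      using \<open>x \<in> {x. c < f x}\<close> by (intro exI[of _ S]) auto
  qed
next
  assume "\<forall>c. open {x. c < f x}"
  then have "eventually (\<lambda>z. y < f z) (at x)" if "y < f x" for x y
    using that by (intro eventually_at_topological[THEN iffD2]) blast
  then show "lsc_fun f" unfolding lsc_fun_def le_Liminf_iff by blast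
qed

lemma lsc_fun_add_continuous:
  fixes f :: "'a::metric_space \<Rightarrow> ereal"
  assumes lsc: "lsc_fun f" and h: "continuous_on UNIV h"
  shows "lsc_fun (\<lambda>x. f x + ereal (h x))"
  unfolding lsc_fun_iff_open_superlevel
proof
  fix c :: ereal
  show "open {x. c < f x + ereal (h x)}"
  proof (cases c)
    case MInf
    then have "{x. c < f x + ereal (h x)} = {x. c < f x}" by auto
    then show ?thesis using lsc unfolding lsc_fun_iff_open_superlevel by simp
  next
    case PInf
    then show ?thesis by simp
  next
    case (real r)
    show ?thesis
    proof (subst open_subopen, intro ballI)
      fix x assume "x \<in> {x. c < f x + ereal (h x)}"
      then have hx: "ereal r < f x + ereal (h x)" using real by simp
      obtain e where e: "e > 0" "ereal (r - h x + e) < f x"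
      proof (cases "f x")
        case (real y)
        then show ?thesis using hx
          by (intro that[of "(y - (r - h x)) / 2"]) (auto simp: field_simps)
      qed (use hx in \<open>auto intro: that[of 1]\<close>)
      define T where "T = {y. ereal (r - h x + e) < f y} \<inter> h -` ball (h x) e"
      have "open T"
        using lsc h unfolding T_def lsc_fun_iff_open_superlevel
        by (intro open_Int open_vimage open_ball) auto
      moreover have "x \<in> T" using e unfolding T_def by auto
      moreover have "T \<subseteq> {x. c < f x + ereal (h x)}"
      proof
        fix y assume "y \<in> T"
        then have "ereal (r - h x + e) < f y" "r < (r - h x + e) + h y"
          unfolding T_def by (auto simp: dist_real_def)
        then show "y \<in> {x. c < f x + ereal (h x)}"
          using real by (cases "f y") auto
      qed
      ultimately show "\<exists>T. open T \<and> x \<in> T \<and> T \<subseteq> {x. c < f x + ereal (h x)}" by blast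
    qed
  qed
qed

lemma lsc_fun_attains_min:
  fixes g :: "'a::topological_space \<Rightarrow> ereal"
  assumes "lsc_fun g" "compact K" "K \<noteq> {}"
  shows "\<exists>p\<in>K. \<forall>z\<in>K. g p \<le> g z"
proof (rule ccontr)
  assume "\<not> ?thesis"
  then have "K \<subseteq> (\<Union>z\<in>K. {x. g z < g x})" by (auto simp: not_le)
  moreover have "open {x. g z < g x}" for z
    using assms(1) unfolding lsc_fun_iff_open_superlevel by blast
  ultimately obtain F where F: "F \<subseteq> K" "finite F" "K \<subseteq> (\<Union>z\<in>F. {x. g z < g x})"
    using compactE_image[OF assms(2)] by metis
  then have "F \<noteq> {}" using assms(3) by blast
  then have "Min (g ` F) \<in> g ` F" using F(2) by simp
  then obtain z0 where z0: "z0 \<in> F" "g z0 = Min (g ` F)" by (metis imageE)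
  then obtain z where z: "z \<in> F" "g z < g z0" using F by blast
  have "g z0 \<le> g z" unfolding z0(2) using F(2) z(1) by (intro Min_le) auto
  then show False using z(2) by simp
qed

text \<open>A lower bound on the unit ball around \<open>x0\<close>, which exists by lower semicontinuity and
  compactness, propagates linearly along rays from \<open>x0\<close> by convexity.\<close>

lemma convex_lsc_linear_minorant:
  fixes f :: "'a::euclidean_space \<Rightarrow> ereal"
  assumes proper: "proper_fun f" and cvx: "convex_ereal_fun f" and lsc: "lsc_fun f"
    and x0: "f x0 \<noteq> \<infinity>"
  shows "\<exists>C\<ge>0. \<forall>x. ereal (- C * (1 + norm (x - x0))) \<le> f x"
proof -
  have ninf: "f x \<noteq> -\<infinity>" for x using proper unfolding proper_fun_def by blast
  obtain F0 where F0: "f x0 = ereal F0" using x0 ninf[of x0] by (cases "f x0") auto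
  obtain q where q: "\<forall>z\<in>cball x0 1. f q \<le> f z"
    using lsc_fun_attains_min[OF lsc, of "cball x0 1"] by auto
  then have "f q \<le> f x0" by simp
  then obtain L where L: "f q = ereal L" using ninf[of q] F0 by (cases "f q") auto
  define C where "C = \<bar>L\<bar> + \<bar>F0\<bar>"
  have bound: "ereal (- C * (1 + norm (x - x0))) \<le> f x" for x
  proof (cases "f x")
    case (real X)
    define r where "r = norm (x - x0)"
    show ?thesis
    proof (cases "r \<le> 1")
      case True
      then have "L \<le> X" using q L real unfolding r_def by (force simp: dist_norm norm_minus_commute)
      have "0 \<le> C * r" unfolding C_def r_def by simp
      then have "- C * (1 + r) \<le> - C" by (simp add: algebra_simps)
      also have "- C \<le> L" unfolding C_def by linarith
      finally show ?thesis using \<open>L \<le> X\<close> real unfolding r_def by simp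
    next
      case False
      define y where "y = (1 - 1 / r) *\<^sub>R x0 + (1 / r) *\<^sub>R x"
      have "y - x0 = (1 / r) *\<^sub>R (x - x0)" unfolding y_def by (simp add: algebra_simps)
      then have "norm (y - x0) = 1" using False unfolding r_def by auto
      then have "f q \<le> f y" using q by (simp add: dist_norm norm_minus_commute)
      also have "f y \<le> ereal (1 - 1 / r) * f x0 + ereal (1 / r) * f x"
        using cvx False unfolding convex_ereal_fun_def y_def by simp
      finally have "L \<le> (1 - 1 / r) * F0 + X / r" using L F0 real by simp
      then have "r * L \<le> r * ((1 - 1 / r) * F0 + X / r)" using False by (simp add: mult_left_mono)
      also have "\<dots> = (r - 1) * F0 + X" using False by (simp add: algebra_simps)
      finally have "r * L - (r - 1) * F0 \<le> X" by simp
      moreover have "- C * (1 + r) \<le> r * L - (r - 1) * F0"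
      proof -
        have "- (r * \<bar>L\<bar>) \<le> r * L" using mult_left_mono[of "- \<bar>L\<bar>" L r] False by simp
        moreover have "(r - 1) * F0 \<le> (r - 1) * \<bar>F0\<bar>"
          using False by (intro mult_left_mono) auto
        moreover have "(r - 1) * \<bar>F0\<bar> \<le> r * \<bar>F0\<bar>" by (simp add: algebra_simps)
        ultimately show ?thesis unfolding C_def by (simp add: algebra_simps)
      qed
      ultimately show ?thesis using real unfolding r_def by simp
    qed
  qed (use ninf in auto)
  have "C \<ge> 0" unfolding C_def by simp
  with bound show ?thesis by auto
qed

text \<open>\<open>prox_point f c a p\<close> says \<open>p = Prox\<^bsub>f/(2c)\<^esub>(a)\<close>.\<close>

definition prox_point :: "('a::real_normed_vector \<Rightarrow> ereal) \<Rightarrow> real \<Rightarrow> 'a \<Rightarrow> 'a \<Rightarrow> bool" where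
  "prox_point f c a p \<longleftrightarrow>
     (\<forall>z. f p + ereal (c * (norm (p - a))\<^sup>2) \<le> f z + ereal (c * (norm (z - a))\<^sup>2))"

text \<open>Outside a large ball the quadratic term dominates the linear minorant, so a minimiser over
  that ball is a global one.\<close>

lemma prox_point_exists:
  fixes f :: "'a::euclidean_space \<Rightarrow> ereal"
  assumes proper: "proper_fun f" and cvx: "convex_ereal_fun f" and lsc: "lsc_fun f"
    and c: "c > 0"
  shows "\<exists>p. prox_point f c a p"
proof -
  obtain x0 where x0: "f x0 \<noteq> \<infinity>" using proper unfolding proper_fun_def by blast
  have ninf: "f x \<noteq> -\<infinity>" for x using proper unfolding proper_fun_def by blast
  obtain C where C: "C \<ge> 0" "\<And>x. ereal (- C * (1 + norm (x - x0))) \<le> f x"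
    using convex_lsc_linear_minorant[OF proper cvx lsc x0] by blast
  define g where "g x = f x + ereal (c * (norm (x - a))\<^sup>2)" for x
  define d where "d = norm (x0 - a)"
  obtain G0 where G0: "g x0 = ereal G0"
    using x0 ninf[of x0] unfolding g_def by (cases "f x0") auto
  have "eventually (\<lambda>u. G0 < - C * (1 + d + u) + c * u\<^sup>2) at_top"
    using c by real_asymp
  then obtain U where U: "\<And>u. u \<ge> U \<Longrightarrow> G0 < - C * (1 + d + u) + c * u\<^sup>2"
    unfolding eventually_at_top_linorder by blast
  define R where "R = max U 0 + d"
  have "lsc_fun g" unfolding g_def by (intro lsc_fun_add_continuous lsc continuous_intros)
  moreover have x0R: "x0 \<in> cball x0 R" unfolding R_def d_def by simp
  ultimately obtain p where p: "\<forall>z\<in>cball x0 R. g p \<le> g z"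
    using lsc_fun_attains_min[of g "cball x0 R"] by (metis compact_cball empty_iff)
  have "g p \<le> ereal G0" using p x0R G0 by metis
  have "g p \<le> g z" for z
  proof (cases "z \<in> cball x0 R")
    case False
    define u where "u = norm (z - a)"
    have zx0: "norm (z - x0) \<le> u + d"
      unfolding u_def d_def by (rule norm_diff_triangle_le) (auto simp: norm_minus_commute)
    have "R < norm (z - x0)" using False by (simp add: dist_norm norm_minus_commute)
    then have "U \<le> u" using zx0 unfolding R_def by linarith
    then have "G0 < - C * (1 + d + u) + c * u\<^sup>2" by (rule U)
    also have "- C * (1 + d + u) \<le> - C * (1 + norm (z - x0))"
      using C(1) zx0 by (simp add: mult_left_mono)
    finally have "ereal G0 < ereal (- C * (1 + norm (z - x0))) + ereal (c * u\<^sup>2)" by simp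
    also have "\<dots> \<le> g z" unfolding g_def u_def by (intro add_right_mono C(2))
    finally show ?thesis using \<open>g p \<le> ereal G0\<close> by simp
  qed (use p in blast)
  then show ?thesis unfolding prox_point_def g_def by blast
qed

lemma prox_point_variational_ineq:
  fixes f :: "'a::real_inner \<Rightarrow> ereal"
  assumes proper: "proper_fun f" and cvx: "convex_ereal_fun f" and p: "prox_point f c a p"
  shows "f p \<noteq> \<infinity>" and "f p + ereal (2 * c * ((a - p) \<bullet> (z - p))) \<le> f z"
proof -
  obtain x0 where "f x0 \<noteq> \<infinity>" using proper unfolding proper_fun_def by blast
  moreover have "f p + ereal (c * (norm (p - a))\<^sup>2) \<le> f x0 + ereal (c * (norm (x0 - a))\<^sup>2)"
    using p unfolding prox_point_def by blast
  ultimately show "f p \<noteq> \<infinity>" by auto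
  moreover have ninf: "f x \<noteq> -\<infinity>" for x using proper unfolding proper_fun_def by blast
  ultimately obtain P where P: "f p = ereal P" by (cases "f p") auto
  show "f p + ereal (2 * c * ((a - p) \<bullet> (z - p))) \<le> f z"
  proof (cases "f z")
    case (real Z)
    define q where "q = (a - p) \<bullet> (z - p)"
    define N where "N = (norm (z - p))\<^sup>2"
    txt \<open>Compare \<open>p\<close> with the convex combinations \<open>(1 - s) p + s z\<close> and let \<open>s \<rightarrow> 0\<close>.\<close>
    have convex_step: "2 * c * q \<le> Z - P + s * (c * N)" if s: "0 < s" "s < 1" for s
    proof -
      define w where "w = (1 - s) *\<^sub>R p + s *\<^sub>R z"
      have "f w \<le> ereal (1 - s) * f p + ereal s * f z"
        using cvx s unfolding convex_ereal_fun_def w_def by blast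
      then have "f w \<le> ereal ((1 - s) * P + s * Z)" using P real by simp
      moreover have "f p + ereal (c * (norm (p - a))\<^sup>2) \<le> f w + ereal (c * (norm (w - a))\<^sup>2)"
        using p unfolding prox_point_def by blast
      ultimately have ineq: "P + c * (norm (p - a))\<^sup>2 \<le> (1 - s) * P + s * Z + c * (norm (w - a))\<^sup>2"
        using P by (cases "f w") auto
      have nw: "(norm (w - a))\<^sup>2 = (norm (p - a))\<^sup>2 - 2 * s * q + s\<^sup>2 * N"
      proof -
        have wa: "w - a = (p - a) + s *\<^sub>R (z - p)" unfolding w_def by (simp add: algebra_simps)
        have "(p - a) \<bullet> (z - p) = - q" unfolding q_def by (simp add: algebra_simps)
        then show ?thesis unfolding N_def wa norm_add_scaleR_power2 by simp
      qed
      have "s * (2 * c * q) \<le> s * (Z - P + s * (c * N))"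
        using ineq unfolding nw by (simp add: algebra_simps power2_eq_square)
      then show ?thesis using s by simp
    qed
    have "((\<lambda>s. Z - P + s * (c * N)) \<longlongrightarrow> Z - P) (at_right 0)"
      by (intro tendsto_eq_intros) auto
    moreover have "eventually (\<lambda>s. 2 * c * q \<le> Z - P + s * (c * N)) (at_right 0)"
      unfolding eventually_at_right_field by (intro exI[of _ 1]) (auto intro: convex_step)
    ultimately have "2 * c * q \<le> Z - P" by (rule tendsto_lowerbound) simp
    then show ?thesis using P real unfolding q_def by simp
  qed (use ninf in auto)
qed

lemma prox_point_firmly_nonexpansive:
  fixes f :: "'a::real_inner \<Rightarrow> ereal"
  assumes "proper_fun f" "convex_ereal_fun f" "c > 0"
    and p: "prox_point f c a p" and q: "prox_point f c b q"
  shows "(norm ((a - p) - (b - q)))\<^sup>2 \<le> ((a - p) - (b - q)) \<bullet> (a - b)"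
proof -
  note vi = prox_point_variational_ineq[OF assms(1,2)]
  obtain P Q where P: "f p = ereal P" and Q: "f q = ereal Q"
    using vi(1)[OF p] vi(1)[OF q] assms(1) unfolding proper_fun_def
    by (metis ereal_cases)
  have "P + 2 * c * ((a - p) \<bullet> (q - p)) \<le> Q" "Q + 2 * c * ((b - q) \<bullet> (p - q)) \<le> P"
    using vi(2)[OF p, of q] vi(2)[OF q, of p] P Q by simp_all
  then have "c * (((a - p) - (b - q)) \<bullet> (q - p)) \<le> 0"
    by (simp add: inner_commute algebra_simps)
  then have "((a - p) - (b - q)) \<bullet> (q - p) \<le> 0"
    using \<open>c > 0\<close> by (simp add: mult_le_0_iff)
  moreover have "(norm ((a - p) - (b - q)))\<^sup>2
      = ((a - p) - (b - q)) \<bullet> (a - b) + ((a - p) - (b - q)) \<bullet> (q - p)"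
    unfolding power2_norm_eq_inner by (simp add: algebra_simps)
  ultimately show ?thesis by linarith
qed

lemma ereal_scaled_add_le_iff:
  assumes s: "s > 0" and "X \<noteq> -\<infinity>" "Y \<noteq> -\<infinity>"
  shows "ereal s * X + ereal A \<le> ereal s * Y + ereal B \<longleftrightarrow> X + ereal (A / s) \<le> Y + ereal (B / s)"
proof (cases X; cases Y)
  fix x y assume "X = ereal x" "Y = ereal y"
  have "s * x + A \<le> s * y + B \<longleftrightarrow> (s * x + A) / s \<le> (s * y + B) / s"
    using s by (simp add: divide_le_cancel)
  then show ?thesis using \<open>X = ereal x\<close> \<open>Y = ereal y\<close> s by (simp add: add_divide_distrib)
qed (use assms in auto)

lemma prox_point_scale_iff:
  fixes f :: "'a::real_normed_vector \<Rightarrow> ereal"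
  assumes ninf: "\<And>x. f x \<noteq> -\<infinity>" and s: "s > 0" and t: "t \<noteq> 0"
  shows "prox_point (\<lambda>u. ereal s * f (t *\<^sub>R u)) c w x
    \<longleftrightarrow> prox_point f (c / (s * t\<^sup>2)) (t *\<^sub>R w) (t *\<^sub>R x)"
proof -
  define G where "G z \<longleftrightarrow> f (t *\<^sub>R x) + ereal (c / (s * t\<^sup>2) * (norm (t *\<^sub>R x - t *\<^sub>R w))\<^sup>2)
    \<le> f z + ereal (c / (s * t\<^sup>2) * (norm (z - t *\<^sub>R w))\<^sup>2)" for z
  have scale: "c * (norm (u - w))\<^sup>2 / s = c / (s * t\<^sup>2) * (norm (t *\<^sub>R u - t *\<^sub>R w))\<^sup>2" for u
    using t by (simp flip: scaleR_diff_right add: power_mult_distrib)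
  have "prox_point (\<lambda>u. ereal s * f (t *\<^sub>R u)) c w x \<longleftrightarrow> (\<forall>u. G (t *\<^sub>R u))"
    unfolding prox_point_def G_def ereal_scaled_add_le_iff[OF s ninf ninf] scale ..
  also have "\<dots> \<longleftrightarrow> (\<forall>z. G z)"
  proof
    assume "\<forall>u. G (t *\<^sub>R u)"
    then have "G (t *\<^sub>R ((1 / t) *\<^sub>R z))" for z by blast
    then show "\<forall>z. G z" using t by simp
  qed blast
  finally show ?thesis unfolding prox_point_def G_def .
qed

lemma prox_point_prox:
  assumes "\<exists>x. prox_point f (1 / 2) y x"
  shows "prox_point f (1 / 2) y (prox f y)"
  using someI_ex[OF assms] unfolding prox_def prox_point_def by simp

lemma prox_point_prox_scaled:
  fixes f :: "'a::euclidean_space \<Rightarrow> ereal"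
  assumes f: "proper_fun f" "convex_ereal_fun f" "lsc_fun f" and s: "s > 0" and t: "t \<noteq> 0"
  shows "prox_point f (1 / (2 * s * t\<^sup>2)) (t *\<^sub>R w) (t *\<^sub>R prox (\<lambda>u. ereal s * f (t *\<^sub>R u)) w)"
proof -
  have ninf: "f x \<noteq> -\<infinity>" for x using f(1) unfolding proper_fun_def by blast
  have scale_iff: "prox_point (\<lambda>u. ereal s * f (t *\<^sub>R u)) (1 / 2) w x
      \<longleftrightarrow> prox_point f (1 / (2 * s * t\<^sup>2)) (t *\<^sub>R w) (t *\<^sub>R x)" for x
    using prox_point_scale_iff[OF _ s t, where f = f and c = "1 / 2" and w = w and x = x] ninf
    by (simp add: mult.assoc)
  obtain P where "prox_point f (1 / (2 * s * t\<^sup>2)) (t *\<^sub>R w) P"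
    using prox_point_exists[OF f] s t by force
  then have "prox_point (\<lambda>u. ereal s * f (t *\<^sub>R u)) (1 / 2) w ((1 / t) *\<^sub>R P)"
    using t by (simp add: scale_iff)
  then show ?thesis using scale_iff prox_point_prox by blast
qed

section \<open>Extreme eigenvalues of symmetric matrices\<close>

lemma selfadjoint_nonneg_form_zero:
  fixes M :: "'a::real_inner \<Rightarrow> 'a"
  assumes lin: "linear M" and adj: "\<And>x y. x \<bullet> M y = M x \<bullet> y"
    and nonneg: "\<And>u. 0 \<le> u \<bullet> M u" and zero: "w \<bullet> M w = 0"
  shows "M w = 0"
proof -
  define r where "r = M w"
  define K where "K = r \<bullet> M r"
  have quad: "0 \<le> 2 * s * (r \<bullet> r) + s\<^sup>2 * K" for s
  proof -
    have "(w + s *\<^sub>R r) \<bullet> M (w + s *\<^sub>R r) = 2 * s * (r \<bullet> r) + s\<^sup>2 * K"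
      using zero adj[of r w] unfolding r_def K_def
      by (simp add: linear_add[OF lin] linear_scale[OF lin] inner_commute power2_eq_square
          algebra_simps)
    then show ?thesis using nonneg by metis
  qed
  have prod: "0 \<le> s * (2 * (r \<bullet> r) + s * K)" for s
    using quad[of s] by (simp add: algebra_simps power2_eq_square)
  then have "2 * (r \<bullet> r) + s * K \<le> 0" if "s < 0" for s
    using that prod[of s] by (simp add: zero_le_mult_iff)
  then have "eventually (\<lambda>s. 2 * (r \<bullet> r) + s * K \<le> 0) (at_left 0)"
    by (auto simp: eventually_at_left_field intro: exI[of _ "-1"])
  moreover have "((\<lambda>s. 2 * (r \<bullet> r) + s * K) \<longlongrightarrow> 2 * (r \<bullet> r)) (at_left 0)"
    by (intro tendsto_eq_intros) auto
  ultimately have "2 * (r \<bullet> r) \<le> 0" by (intro tendsto_upperbound) auto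
  then have "r \<bullet> r = 0" using inner_ge_zero[of r] by linarith
  then show ?thesis unfolding r_def by simp
qed

lemma selfadjoint_max_eigenvalue:
  fixes M :: "'a::euclidean_space \<Rightarrow> 'a"
  assumes lin: "linear M" and adj: "\<And>x y. x \<bullet> M y = M x \<bullet> y"
  obtains \<mu> w where "w \<noteq> 0" "M w = \<mu> *\<^sub>R w" "\<And>u. u \<bullet> M u \<le> \<mu> * (norm u)\<^sup>2"
proof -
  define q where "q u = u \<bullet> M u" for u
  obtain e :: 'a where "norm e = 1" using vector_choose_size[of 1] by auto
  then have "sphere (0::'a) 1 \<noteq> {}" by auto
  moreover have "continuous_on (sphere 0 1) q"
    using lin unfolding q_def linear_conv_bounded_linear
    by (intro continuous_intros linear_continuous_on)
  ultimately obtain w where w: "w \<in> sphere 0 1" "\<And>y. y \<in> sphere 0 1 \<Longrightarrow> q y \<le> q w"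
    using continuous_attains_sup[OF compact_sphere] by blast
  define \<mu> where "\<mu> = q w"
  have bound: "u \<bullet> M u \<le> \<mu> * (norm u)\<^sup>2" for u
  proof (cases "u = 0")
    case False
    have qle: "q ((1 / norm u) *\<^sub>R u) \<le> \<mu>" using False w(2) unfolding \<mu>_def by simp
    have "u \<bullet> M u = (norm u)\<^sup>2 * q ((1 / norm u) *\<^sub>R u)"
      using False unfolding q_def by (simp add: linear_scale[OF lin] power2_eq_square)
    then show ?thesis using mult_right_mono[OF qle, of "(norm u)\<^sup>2"] by (simp add: mult.commute)
  qed (simp add: linear_0[OF lin])
  define N where "N u = \<mu> *\<^sub>R u - M u" for u
  have "N w = 0"
  proof (rule selfadjoint_nonneg_form_zero[where M = N])
    show "linear N" unfolding N_def by (intro linear_compose_sub linear_scaleR lin linear_id)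
  next
    show "x \<bullet> N y = N x \<bullet> y" for x y
      unfolding N_def by (simp add: inner_diff_left inner_diff_right adj)
  next
    show "0 \<le> u \<bullet> N u" for u
      using bound[of u] unfolding N_def by (simp add: algebra_simps power2_norm_eq_inner)
  next
    show "w \<bullet> N w = 0"
      using w(1) unfolding N_def \<mu>_def q_def by (simp add: algebra_simps norm_eq_1)
  qed
  then have "M w = \<mu> *\<^sub>R w" unfolding N_def by simp
  moreover have "w \<noteq> 0" using w(1) by auto
  ultimately show ?thesis using that bound by blast
qed

lemma symmetric_matrix_selfadjoint:
  fixes A :: "real^'n^'n"
  assumes "transpose A = A"
  shows "x \<bullet> (A *v y) = (A *v x) \<bullet> y"
  by (metis assms dot_lmul_matrix transpose_matrix_vector)

lemma finite_eigenvalues_symmetric: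
  fixes A :: "real^'n^'n"
  assumes sym: "transpose A = A"
  shows "finite (eigenvalues A)"
proof -
  define ev where "ev \<mu> = (SOME w. w \<noteq> 0 \<and> A *v w = \<mu> *\<^sub>R w)" for \<mu>
  have ev: "ev \<mu> \<noteq> 0" "A *v ev \<mu> = \<mu> *\<^sub>R ev \<mu>" if "\<mu> \<in> eigenvalues A" for \<mu>
    using someI_ex[of "\<lambda>w. w \<noteq> 0 \<and> A *v w = \<mu> *\<^sub>R w"] that
    unfolding ev_def eigenvalues_def by auto
  have inj: "inj_on ev (eigenvalues A)"
  proof (rule inj_onI)
    fix \<mu> \<nu> assume "\<mu> \<in> eigenvalues A" "\<nu> \<in> eigenvalues A" "ev \<mu> = ev \<nu>"
    then have "\<mu> *\<^sub>R ev \<mu> = \<nu> *\<^sub>R ev \<mu>" using ev by metis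
    then show "\<mu> = \<nu>" using ev(1)[OF \<open>\<mu> \<in> eigenvalues A\<close>] by simp
  qed
  have "pairwise orthogonal (ev ` eigenvalues A)"
  proof (rule pairwiseI)
    fix x y assume "x \<in> ev ` eigenvalues A" "y \<in> ev ` eigenvalues A" "x \<noteq> y"
    then obtain \<mu> \<nu> where \<mu>: "\<mu> \<in> eigenvalues A" and \<nu>: "\<nu> \<in> eigenvalues A"
      and xy: "x = ev \<mu>" "y = ev \<nu>" "\<mu> \<noteq> \<nu>" by blast
    have "\<mu> * (ev \<mu> \<bullet> ev \<nu>) = ev \<mu> \<bullet> (A *v ev \<nu>)"
      using ev(2)[OF \<mu>] symmetric_matrix_selfadjoint[OF sym] by simp
    also have "\<dots> = \<nu> * (ev \<mu> \<bullet> ev \<nu>)" using ev(2)[OF \<nu>] by simp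
    finally show "orthogonal x y" using xy unfolding orthogonal_def by simp
  qed
  moreover have "0 \<notin> ev ` eigenvalues A" using ev(1) by auto
  ultimately have "independent (ev ` eigenvalues A)" by (rule pairwise_orthogonal_independent)
  then have "finite (ev ` eigenvalues A)" using independent_bound by blast
  then show ?thesis using inj finite_imageD by blast
qed

lemma quadratic_form_le_rho_max:
  fixes A :: "real^'n^'n"
  assumes sym: "transpose A = A"
  shows "u \<bullet> (A *v u) \<le> rho_max A * (norm u)\<^sup>2"
proof -
  obtain \<mu> w where "w \<noteq> 0" "A *v w = \<mu> *\<^sub>R w"
    and \<mu>: "\<And>u. u \<bullet> (A *v u) \<le> \<mu> * (norm u)\<^sup>2"
    using selfadjoint_max_eigenvalue[OF matrix_vector_mul_linear
        symmetric_matrix_selfadjoint[OF sym]]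
    by blast
  then have "\<mu> \<in> eigenvalues A" unfolding eigenvalues_def by blast
  then have "\<mu> \<le> rho_max A" unfolding rho_max_def using finite_eigenvalues_symmetric[OF sym] by simp
  then show ?thesis using \<mu>[of u] mult_right_mono[of \<mu> "rho_max A" "(norm u)\<^sup>2"] by simp
qed

lemma rho_min_le_quadratic_form:
  fixes A :: "real^'n^'n"
  assumes sym: "transpose A = A"
  shows "rho_min A * (norm u)\<^sup>2 \<le> u \<bullet> (A *v u)"
proof -
  have adj: "x \<bullet> - (A *v y) = - (A *v x) \<bullet> y" for x y
    using symmetric_matrix_selfadjoint[OF sym, of x y] by simp
  obtain \<mu> w where "w \<noteq> 0" "- (A *v w) = \<mu> *\<^sub>R w"
    and \<mu>: "\<And>u. u \<bullet> - (A *v u) \<le> \<mu> * (norm u)\<^sup>2"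
    using selfadjoint_max_eigenvalue[OF linear_compose_neg[OF matrix_vector_mul_linear] adj]
    by blast
  then have "A *v w = (- \<mu>) *\<^sub>R w" by (metis minus_minus scaleR_minus_left)
  then have "- \<mu> \<in> eigenvalues A" using \<open>w \<noteq> 0\<close> unfolding eigenvalues_def by blast
  then have "rho_min A \<le> - \<mu>"
    unfolding rho_min_def using finite_eigenvalues_symmetric[OF sym] by simp
  then show ?thesis using \<mu>[of u] mult_right_mono[of "rho_min A" "- \<mu>" "(norm u)\<^sup>2"] by simp
qed

lemma inner_mult_transpose:
  fixes B :: "real^'d^'m"
  shows "e \<bullet> ((B ** transpose B) *v d) = (transpose B *v e) \<bullet> (transpose B *v d)"
  by (metis dot_lmul_matrix matrix_vector_mul_assoc transpose_matrix_vector)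

lemma norm_transpose_mult_le_rho_max:
  fixes B :: "real^'d^'m"
  shows "(norm (transpose B *v u))\<^sup>2 \<le> rho_max (B ** transpose B) * (norm u)\<^sup>2"
  using quadratic_form_le_rho_max[of "B ** transpose B" u]
  by (simp add: matrix_transpose_mul inner_mult_transpose power2_norm_eq_inner)

lemma rho_min_le_norm_transpose_mult:
  fixes B :: "real^'d^'m"
  shows "rho_min (B ** transpose B) * (norm u)\<^sup>2 \<le> (norm (transpose B *v u))\<^sup>2"
  using rho_min_le_quadratic_form[of "B ** transpose B" u]
  by (simp add: matrix_transpose_mul inner_mult_transpose power2_norm_eq_inner)

section \<open>One iteration of the primal-dual scheme\<close>

text \<open>\<open>V\<close> has the shape of the dual update and \<open>W\<close> that of the fixed-point equation for
  \<open>v*\<close>; by \<open>prox_point_prox_scaled\<close> both prox terms are proximal points of \<open>f\<close>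
  with the same weight \<open>1/(2t)\<close>, at \<open>a\<close> and at \<open>t w\<close>.\<close>

lemma dual_step_firmly_nonexpansive:
  fixes f :: "'a::euclidean_space \<Rightarrow> ereal"
  assumes f: "proper_fun f" "convex_ereal_fun f" "lsc_fun f" and t: "t > 0"
    and V: "V = (1 / t) *\<^sub>R (a - prox (\<lambda>u. ereal t * f u) a)"
    and W: "W = w - prox (\<lambda>u. ereal (1 / t) * f (t *\<^sub>R u)) w"
  shows "(norm (t *\<^sub>R (V - W)))\<^sup>2 \<le> (t *\<^sub>R (V - W)) \<bullet> (a - t *\<^sub>R w)"
proof -
  define p where "p = prox (\<lambda>u. ereal t * f u) a"
  define q where "q = t *\<^sub>R prox (\<lambda>u. ereal (1 / t) * f (t *\<^sub>R u)) w"
  have "prox_point f (1 / (2 * t)) a p"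
    using prox_point_prox_scaled[OF f t, of 1 a] unfolding p_def by simp
  moreover have "prox_point f (1 / (2 * t)) (t *\<^sub>R w) q"
    using prox_point_prox_scaled[OF f _, of "1 / t" t w] t unfolding q_def
    by (simp add: power2_eq_square)
  ultimately have "(norm ((a - p) - (t *\<^sub>R w - q)))\<^sup>2 \<le> ((a - p) - (t *\<^sub>R w - q)) \<bullet> (a - t *\<^sub>R w)"
    using t by (intro prox_point_firmly_nonexpansive[OF f(1,2)]) auto
  moreover have "(a - p) - (t *\<^sub>R w - q) = t *\<^sub>R (V - W)"
    using t unfolding V W p_def q_def by (simp add: algebra_simps)
  ultimately show ?thesis by simp
qed

lemma primal_dual_step_estimate:
  fixes B :: "real^'d^'m" and e d :: "real^'m" and D :: "real^'d"
  assumes lam: "lam > 0" and t: "t > 0"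
    and upper: "\<And>u. lam * (norm (transpose B *v u))\<^sup>2 \<le> (norm u)\<^sup>2"
    and lower: "\<And>u. r * (norm u)\<^sup>2 \<le> (norm (transpose B *v u))\<^sup>2"
    and firm: "(norm (t *\<^sub>R e))\<^sup>2
      \<le> (t *\<^sub>R e) \<bullet> (B *v D + t *\<^sub>R (d - lam *\<^sub>R ((B ** transpose B) *v d)))"
  shows "(norm (D - (lam * t) *\<^sub>R (transpose B *v e)))\<^sup>2 + lam * t\<^sup>2 * (norm e)\<^sup>2
    \<le> (norm D)\<^sup>2 + lam * t\<^sup>2 * (1 - lam * r) * (norm d)\<^sup>2"
proof -
  define y z where "y = transpose B *v e" and "z = transpose B *v d"
  have "e \<bullet> ((B ** transpose B) *v d) = y \<bullet> z" "e \<bullet> (B *v D) = y \<bullet> D"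
    unfolding y_def z_def by (rule inner_mult_transpose) (simp add: dot_lmul_matrix[symmetric])
  then have ip: "(t *\<^sub>R e) \<bullet> (B *v D + t *\<^sub>R (d - lam *\<^sub>R ((B ** transpose B) *v d)))
      = t * (y \<bullet> D + t * (e \<bullet> d - lam * (y \<bullet> z)))"
    by (simp add: algebra_simps)
  have "(norm (t *\<^sub>R e))\<^sup>2 = t * (t * (norm e)\<^sup>2)" using t by (simp add: power2_eq_square)
  then have "t * (t * (norm e)\<^sup>2) \<le> t * (y \<bullet> D + t * (e \<bullet> d - lam * (y \<bullet> z)))"
    using firm unfolding ip by simp
  then have firm': "t * (norm e)\<^sup>2 \<le> y \<bullet> D + t * (e \<bullet> d - lam * (y \<bullet> z))"
    using t by simp
  have "lam * (norm (y - z))\<^sup>2 \<le> (norm (e - d))\<^sup>2"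
    using upper[of "e - d"] unfolding y_def z_def by (simp add: matrix_vector_mult_diff_distrib)
  then have psd: "lam * ((norm y)\<^sup>2 - 2 * (y \<bullet> z))
      \<le> (norm e)\<^sup>2 - 2 * (e \<bullet> d) + (norm d)\<^sup>2 - lam * (norm z)\<^sup>2"
    by (simp add: power2_norm_eq_inner inner_commute algebra_simps)
  have "(norm (D - (lam * t) *\<^sub>R y))\<^sup>2 + lam * t\<^sup>2 * (norm e)\<^sup>2
      = (norm D)\<^sup>2 - 2 * lam * t * (y \<bullet> D) + lam * t\<^sup>2 * (lam * (norm y)\<^sup>2 + (norm e)\<^sup>2)"
    using norm_add_scaleR_power2[of D "- (lam * t)" y]
    by (simp add: inner_commute power2_eq_square algebra_simps)
  also have "\<dots> \<le> (norm D)\<^sup>2 + lam * t\<^sup>2 * ((norm d)\<^sup>2 - lam * (norm z)\<^sup>2)"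
  proof -
    have "2 * lam * t * (t * (norm e)\<^sup>2) \<le> 2 * lam * t * (y \<bullet> D + t * (e \<bullet> d - lam * (y \<bullet> z)))"
      using firm' lam t by (intro mult_left_mono) auto
    moreover have "lam * t\<^sup>2 * (lam * ((norm y)\<^sup>2 - 2 * (y \<bullet> z)))
        \<le> lam * t\<^sup>2 * ((norm e)\<^sup>2 - 2 * (e \<bullet> d) + (norm d)\<^sup>2 - lam * (norm z)\<^sup>2)"
      using psd lam by (intro mult_left_mono) auto
    ultimately show ?thesis by (simp add: power2_eq_square algebra_simps)
  qed
  also have "\<dots> \<le> (norm D)\<^sup>2 + lam * t\<^sup>2 * (1 - lam * r) * (norm d)\<^sup>2"
    using mult_left_mono[OF lower[of d], of "lam * (lam * t\<^sup>2)"] lam unfolding z_def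
    by (simp add: algebra_simps)
  finally show ?thesis unfolding y_def .
qed

lemma iteration_step_estimate:
  fixes f1 :: "real^'m \<Rightarrow> ereal" and B :: "real^'d^'m"
    and X G xs Gs Xn :: "real^'d" and V vs Vn :: "real^'m"
  assumes f1: "proper_fun f1" "convex_ereal_fun f1" "lsc_fun f1"
    and lam: "0 < lam" "lam * rho_max (B ** transpose B) \<le> 1" and gam: "0 < gam"
    and Vn: "Vn = (\<lambda>w. (lam / gam) *\<^sub>R (w - prox (\<lambda>u. ereal (gam / lam) * f1 u) w))
        (B *v (X - gam *\<^sub>R G) + (gam / lam) *\<^sub>R (V - lam *\<^sub>R ((B ** transpose B) *v V)))"
    and Xn: "Xn = X - gam *\<^sub>R G - gam *\<^sub>R (transpose B *v Vn)"
    and vs: "vs = (\<lambda>w. w - prox (\<lambda>u. ereal (lam / gam) * f1 ((gam / lam) *\<^sub>R u)) w)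
        ((lam / gam) *\<^sub>R (B *v (xs - gam *\<^sub>R Gs)) + (vs - lam *\<^sub>R ((B ** transpose B) *v vs)))"
    and xs: "xs = xs - gam *\<^sub>R Gs - gam *\<^sub>R (transpose B *v vs)"
  shows "(norm (Xn - xs))\<^sup>2 + gam\<^sup>2 / lam * (norm (Vn - vs))\<^sup>2
    \<le> (norm (X - xs))\<^sup>2 - 2 * gam * ((G - Gs) \<bullet> (X - xs)) + gam\<^sup>2 * (norm (G - Gs))\<^sup>2
      + gam\<^sup>2 / lam * (1 - lam * rho_min (B ** transpose B)) * (norm (V - vs))\<^sup>2"
proof -
  define t where "t = gam / lam"
  have t: "t > 0" "lam / gam = 1 / t" "lam * t = gam" "lam * t\<^sup>2 = gam\<^sup>2 / lam"
    using lam gam unfolding t_def by (auto simp: power2_eq_square)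
  define D where "D = (X - gam *\<^sub>R G) - (xs - gam *\<^sub>R Gs)"
  define a where "a = B *v (X - gam *\<^sub>R G) + t *\<^sub>R (V - lam *\<^sub>R ((B ** transpose B) *v V))"
  define w where
    "w = (1 / t) *\<^sub>R (B *v (xs - gam *\<^sub>R Gs)) + (vs - lam *\<^sub>R ((B ** transpose B) *v vs))"
  have upper: "lam * (norm (transpose B *v u))\<^sup>2 \<le> (norm u)\<^sup>2" for u
  proof -
    have "lam * (norm (transpose B *v u))\<^sup>2 \<le> lam * (rho_max (B ** transpose B) * (norm u)\<^sup>2)"
      using norm_transpose_mult_le_rho_max lam(1) by (intro mult_left_mono) auto
    also have "\<dots> \<le> (norm u)\<^sup>2"
      using mult_right_mono[OF lam(2), of "(norm u)\<^sup>2"] by (simp add: mult.assoc)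
    finally show ?thesis .
  qed
  have "(norm (t *\<^sub>R (Vn - vs)))\<^sup>2 \<le> (t *\<^sub>R (Vn - vs)) \<bullet> (a - t *\<^sub>R w)"
    using Vn vs unfolding a_def w_def t(2) t_def[symmetric]
    by (intro dual_step_firmly_nonexpansive[OF f1 t(1)]) simp_all
  also have "a - t *\<^sub>R w = B *v D + t *\<^sub>R ((V - vs) - lam *\<^sub>R ((B ** transpose B) *v (V - vs)))"
    using t(1) unfolding a_def w_def D_def by (simp add: algebra_simps)
  finally have "(norm (D - (lam * t) *\<^sub>R (transpose B *v (Vn - vs))))\<^sup>2
        + lam * t\<^sup>2 * (norm (Vn - vs))\<^sup>2
      \<le> (norm D)\<^sup>2 + lam * t\<^sup>2 * (1 - lam * rho_min (B ** transpose B)) * (norm (V - vs))\<^sup>2"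
    by (rule primal_dual_step_estimate[OF lam(1) t(1) upper rho_min_le_norm_transpose_mult])
  moreover have "Xn - xs = D - gam *\<^sub>R (transpose B *v (Vn - vs))"
    using xs unfolding Xn D_def by (simp add: algebra_simps)
  moreover have "(norm D)\<^sup>2
      = (norm (X - xs))\<^sup>2 - 2 * gam * ((G - Gs) \<bullet> (X - xs)) + gam\<^sup>2 * (norm (G - Gs))\<^sup>2"
    using norm_add_scaleR_power2[of "X - xs" "- gam" "G - Gs"]
    unfolding D_def by (simp add: algebra_simps inner_commute)
  ultimately show ?thesis unfolding t(3,4) by simp
qed

lemma stepsize_antimono:
  fixes c \<alpha> :: real
  assumes "0 \<le> c" "0 \<le> \<alpha>" "1 \<le> k"
  shows "c / real (Suc k) powr \<alpha> \<le> c / real k powr \<alpha>"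
  using assms by (intro divide_left_mono powr_mono2) auto

section \<open>Averaging over the sampled batch\<close>

lemma iterate_depends_on_past:
  fixes z :: "nat \<Rightarrow> (nat \<Rightarrow> 'i) \<Rightarrow> 'a"
  assumes init: "\<And>s s'. z 1 s = z 1 s'"
    and step: "\<And>k s s'. 1 \<le> k \<Longrightarrow> s k = s' k \<Longrightarrow> z k s = z k s' \<Longrightarrow> z (Suc k) s = z (Suc k) s'"
    and j: "1 \<le> j" and past: "\<forall>i\<in>{1..<j}. s i = s' i"
  shows "z j s = z j s'"
  using j past
proof (induction j rule: nat_induct_at_least)
  case (Suc j)
  then show ?case by (intro step) auto
qed (rule init)

lemma mean_of_batch_means:
  fixes g :: "nat \<Rightarrow> 'a::real_vector"
  assumes "0 < p"
  shows "(1 / real N) *\<^sub>R (\<Sum>i<N. (1 / real p) *\<^sub>R (\<Sum>j\<in>{i * p..<(i + 1) * p}. g j))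
    = (1 / real (N * p)) *\<^sub>R (\<Sum>j<N * p. g j)"
proof -
  have "(\<Sum>i<N. \<Sum>j\<in>{i * p..<(i + 1) * p}. g j) = (\<Sum>j<N * p. g j)"
    using sum.nat_group[of g p N] by (simp add: add.commute)
  then show ?thesis by (simp flip: scaleR_sum_right)
qed

lemma expect_k_mono:
  assumes "\<And>s. f s \<le> g s"
  shows "expect_k N k f \<le> expect_k N k g"
  unfolding expect_k_def using assms by (intro divide_right_mono sum_mono) auto

lemma expect_k_add: "expect_k N k (\<lambda>s. f s + g s) = expect_k N k f + expect_k N k g"
  unfolding expect_k_def by (simp add: sum.distrib add_divide_distrib)

lemma expect_k_diff: "expect_k N k (\<lambda>s. f s - g s) = expect_k N k f - expect_k N k g"
  unfolding expect_k_def by (simp add: sum_subtractf diff_divide_distrib)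

lemma expect_k_mult_left: "expect_k N k (\<lambda>s. c * f s) = c * expect_k N k f"
  unfolding expect_k_def by (simp add: sum_distrib_left)

lemma sum_PiE_insert:
  assumes "k \<notin> I"
  shows "(\<Sum>s\<in>PiE (insert k I) T. g s) = (\<Sum>s\<in>PiE I T. \<Sum>y\<in>T k. g (s(k := y)))"
proof -
  have "(\<Sum>s\<in>PiE (insert k I) T. g s) = (\<Sum>(y, s)\<in>T k \<times> PiE I T. g (s(k := y)))"
    unfolding PiE_insert_eq using inj_combinator[OF assms]
    by (subst sum.reindex) (auto simp: case_prod_beta)
  also have "\<dots> = (\<Sum>s\<in>PiE I T. \<Sum>y\<in>T k. g (s(k := y)))"
    by (simp add: sum.cartesian_product[symmetric] sum.swap[of _ "T k"])
  finally show ?thesis .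
qed

lemma expect_k_Suc:
  assumes "1 \<le> k"
  shows "expect_k N (Suc k) g = expect_k N k (\<lambda>s. (\<Sum>i<N. g (s(k := i))) / real N)"
proof -
  have ins: "{1..<Suc k} = insert k {1..<k}" using assms by auto
  have card: "card (PiE {1..<Suc k} (\<lambda>_. {..<N})) = N * card (PiE {1..<k} (\<lambda>_. {..<N}))"
    unfolding ins by (simp add: card_PiE)
  have "(\<Sum>s\<in>PiE {1..<Suc k} (\<lambda>_. {..<N}). g s)
      = (\<Sum>s\<in>PiE {1..<k} (\<lambda>_. {..<N}). \<Sum>i<N. g (s(k := i)))"
    unfolding ins by (rule sum_PiE_insert) simp
  then show ?thesis
    unfolding expect_k_def card by (simp add: sum_divide_distrib[symmetric] mult.commute)
qed

lemma mean_le_of_inner_bounds: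
  fixes G :: "nat \<Rightarrow> 'a::real_inner"
  assumes N: "0 < N" and bound: "\<And>i. i < N \<Longrightarrow> L i \<le> C - c * ((G i - H) \<bullet> Y) + W i"
  shows "(\<Sum>i<N. L i) / N \<le> C - c * (((1 / real N) *\<^sub>R (\<Sum>i<N. G i) - H) \<bullet> Y) + (\<Sum>i<N. W i) / N"
proof -
  define I where "I = ((\<Sum>i<N. G i) - real N *\<^sub>R H) \<bullet> Y"
  have "(\<Sum>i<N. L i) \<le> (\<Sum>i<N. C - c * ((G i - H) \<bullet> Y) + W i)"
    using bound by (intro sum_mono) simp
  also have "\<dots> = N * C - c * I + (\<Sum>i<N. W i)"
    unfolding I_def
    by (simp add: sum.distrib sum_subtractf inner_sum_left inner_diff_left right_diff_distrib
        sum_distrib_left)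
  finally have le: "(\<Sum>i<N. L i) / N \<le> (N * C - c * I + (\<Sum>i<N. W i)) / N"
    using N by (simp add: divide_right_mono)
  have "((1 / real N) *\<^sub>R (\<Sum>i<N. G i) - H) \<bullet> Y = I / N"
    using N unfolding I_def by (simp add: inner_diff_left diff_divide_distrib)
  with le show ?thesis using N by (simp add: add_divide_distrib diff_divide_distrib)
qed

lemma expect_k_Suc_le_of_inner_bounds:
  fixes G :: "nat \<Rightarrow> (nat \<Rightarrow> nat) \<Rightarrow> 'a::real_inner"
  assumes k: "1 \<le> k" and N: "0 < N"
    and bound: "\<And>s i. i < N \<Longrightarrow> L (s(k := i)) \<le> C s - c * ((G i s - H s) \<bullet> Y s) + W (s(k := i))"
  shows "expect_k N (Suc k) L \<le> expect_k N k C
    - c * expect_k N k (\<lambda>s. ((1 / real N) *\<^sub>R (\<Sum>i<N. G i s) - H s) \<bullet> Y s)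
    + expect_k N (Suc k) W"
proof -
  have "expect_k N (Suc k) L \<le> expect_k N k (\<lambda>s. C s
      - c * (((1 / real N) *\<^sub>R (\<Sum>i<N. G i s) - H s) \<bullet> Y s) + (\<Sum>i<N. W (s(k := i))) / N)"
    unfolding expect_k_Suc[OF k] using bound by (intro expect_k_mono mean_le_of_inner_bounds[OF N])
  then show ?thesis
    unfolding expect_k_Suc[OF k] expect_k_add expect_k_diff expect_k_mult_left .
qed

theorem lemma4p1:
  fixes f1 :: "real^'m \<Rightarrow> ereal"
    and B :: "real^'d^'m"
    and n p :: nat
    and phi :: "nat \<Rightarrow> real^'d \<Rightarrow> real"
    and gphi :: "nat \<Rightarrow> real^'d \<Rightarrow> real^'d"
    and f2 :: "real^'d \<Rightarrow> real"
    and g2 :: "real^'d \<Rightarrow> real^'d"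
    and gb :: "nat \<Rightarrow> real^'d \<Rightarrow> real^'d"
    and c \<alpha> lam :: real
    and \<gamma> :: "nat \<Rightarrow> real"
    and x :: "nat \<Rightarrow> (nat \<Rightarrow> nat) \<Rightarrow> real^'d"
    and v :: "nat \<Rightarrow> (nat \<Rightarrow> nat) \<Rightarrow> real^'m"
    and x1 xs :: "real^'d"
    and v1 vs :: "real^'m"
  assumes f1: "proper_fun f1" "convex_ereal_fun f1" "lsc_fun f1"
    and n: "0 < n" and p: "0 < p" "p dvd n"
    and phi_convex: "\<And>j. j < n \<Longrightarrow> convex_on UNIV (phi j)"
    and phi_grad: "\<And>j z. j < n \<Longrightarrow> (phi j has_derivative (\<lambda>h. gphi j z \<bullet> h)) (at z)"
    and f2_def: "f2 = (\<lambda>z. (1 / real n) * (\<Sum>j<n. phi j z))"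
    and g2_def: "g2 = (\<lambda>z. (1 / real n) *\<^sub>R (\<Sum>j<n. gphi j z))"
    and gb_def: "gb = (\<lambda>i z. (1 / real p) *\<^sub>R (\<Sum>j\<in>{i * p..<(i + 1) * p}. gphi j z))"
    and c: "0 < c" and \<alpha>: "0 < \<alpha>" "\<alpha> \<le> 1"
    and lam: "0 < lam" "lam * rho_max (B ** transpose B) \<le> 1"
    and \<gamma>_def: "\<gamma> = (\<lambda>k. c / (real k powr \<alpha>))"
    and init_x: "\<And>s. x 1 s = x1" and init_v: "\<And>s. v 1 s = v1"
    and step_v: "\<And>k s. 1 \<le> k \<Longrightarrow>
       v (Suc k) s =
         (\<lambda>w. (lam / \<gamma> k) *\<^sub>R (w - prox (\<lambda>u. ereal (\<gamma> k / lam) * f1 u) w))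
           (B *v (x k s - \<gamma> k *\<^sub>R gb (s k) (x k s))
            + (\<gamma> k / lam) *\<^sub>R (v k s - lam *\<^sub>R ((B ** transpose B) *v v k s)))"
    and step_x: "\<And>k s. 1 \<le> k \<Longrightarrow>
       x (Suc k) s = x k s - \<gamma> k *\<^sub>R gb (s k) (x k s) - \<gamma> k *\<^sub>R (transpose B *v v (Suc k) s)"
    and xs_min: "\<And>z. f1 (B *v xs) + ereal (f2 xs) \<le> f1 (B *v z) + ereal (f2 z)"
    and vs_fix: "\<And>k. 1 \<le> k \<Longrightarrow>
       vs = (\<lambda>w. w - prox (\<lambda>u. ereal (lam / \<gamma> k) * f1 ((\<gamma> k / lam) *\<^sub>R u)) w)
              ((lam / \<gamma> k) *\<^sub>R (B *v (xs - \<gamma> k *\<^sub>R g2 xs))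
               + (vs - lam *\<^sub>R ((B ** transpose B) *v vs)))"
    and xs_fix: "\<And>k. 1 \<le> k \<Longrightarrow>
       xs = xs - \<gamma> k *\<^sub>R g2 xs - \<gamma> k *\<^sub>R (transpose B *v vs)"
    and k: "1 \<le> k"
  shows "expect_k (n div p) (k + 1)
           (\<lambda>s. (norm (x (k + 1) s - xs))\<^sup>2 + (\<gamma> (k + 1))\<^sup>2 / lam * (norm (v (k + 1) s - vs))\<^sup>2)
         \<le> expect_k (n div p) k (\<lambda>s. (norm (x k s - xs))\<^sup>2)
           + (\<gamma> k)\<^sup>2 / lam * (1 - lam * rho_min (B ** transpose B))
               * expect_k (n div p) k (\<lambda>s. (norm (v k s - vs))\<^sup>2)
           - 2 * \<gamma> k * expect_k (n div p) k (\<lambda>s. (g2 (x k s) - g2 xs) \<bullet> (x k s - xs))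
           + (\<gamma> k)\<^sup>2 * expect_k (n div p) (k + 1) (\<lambda>s. (norm (gb (s k) (x k s) - g2 xs))\<^sup>2)"
proof -
  define N where "N = n div p"
  have N: "0 < N" "N * p = n" using n p unfolding N_def by (auto simp: dvd_def)
  have \<gamma>: "0 < \<gamma> k" "(\<gamma> (k + 1))\<^sup>2 \<le> (\<gamma> k)\<^sup>2"
    using stepsize_antimono[of c \<alpha> k] c \<alpha> k unfolding \<gamma>_def by (auto intro: power_mono)
  have past: "x k (s(k := i)) = x k s \<and> v k (s(k := i)) = v k s" for s i
    using iterate_depends_on_past[where z = "\<lambda>j s. (x j s, v j s)", OF _ _ k, of "s(k := i)" s]
      init_x init_v by (auto simp: step_x step_v)
  have mean_gb: "(1 / real N) *\<^sub>R (\<Sum>i<N. gb i z) = g2 z" for z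
    using mean_of_batch_means[OF p(1), of N "\<lambda>j. gphi j z"] N unfolding gb_def g2_def by simp
  define L where "L = (\<lambda>s. (norm (x (k + 1) s - xs))\<^sup>2
    + (\<gamma> (k + 1))\<^sup>2 / lam * (norm (v (k + 1) s - vs))\<^sup>2)"
  define C where "C s = (norm (x k s - xs))\<^sup>2
    + (\<gamma> k)\<^sup>2 / lam * (1 - lam * rho_min (B ** transpose B)) * (norm (v k s - vs))\<^sup>2" for s
  define W where "W = (\<lambda>s. (norm (gb (s k) (x k s) - g2 xs))\<^sup>2)"
  have "L (s(k := i)) \<le> C s - 2 * \<gamma> k * ((gb i (x k s) - g2 xs) \<bullet> (x k s - xs))
      + (\<gamma> k)\<^sup>2 * W (s(k := i))" for s i
  proof -
    have "(\<gamma> (k + 1))\<^sup>2 / lam * (norm (v (Suc k) (s(k := i)) - vs))\<^sup>2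
      \<le> (\<gamma> k)\<^sup>2 / lam * (norm (v (Suc k) (s(k := i)) - vs))\<^sup>2"
      using \<gamma>(2) lam(1) by (intro mult_right_mono divide_right_mono) auto
    with iteration_step_estimate[OF f1 lam \<gamma>(1) step_v[OF k, of "s(k := i)"]
        step_x[OF k, of "s(k := i)"] vs_fix[OF k] xs_fix[OF k]]
    show ?thesis unfolding L_def C_def W_def using past by simp
  qed
  then have "expect_k N (Suc k) L \<le> expect_k N k C
      - 2 * \<gamma> k * expect_k N k (\<lambda>s. ((1 / real N) *\<^sub>R (\<Sum>i<N. gb i (x k s)) - g2 xs) \<bullet> (x k s - xs))
      + expect_k N (Suc k) (\<lambda>s. (\<gamma> k)\<^sup>2 * W s)"
    by (intro expect_k_Suc_le_of_inner_bounds[OF k N(1)])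
  then show ?thesis
    unfolding L_def[symmetric] W_def[symmetric] N_def[symmetric]
    unfolding Suc_eq_plus1[symmetric] C_def expect_k_add expect_k_mult_left mean_gb .
qed

end
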